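(* Let $M$ be a left $\bar k[t,\sigma]$-module finitely generated both over $\bar k[\sigma]$ and over $\bar k[t]$. Let $M_\sigma$ (resp. $M_t$) be the sum of all $\bar k[\sigma]$-submodules (resp. $\bar k[t]$-submodules) $N\subset M$ with $\dim_{\bar k}N<\infty$. Then $M_\sigma=M_t$, $\dim_{\bar k}M_\sigma<\infty$, and $M/M_\sigma$ is free of finite rank both over $\bar k[\sigma]$ and over $\bar k[t]$.
   Context: $\bar k$ is the algebraic closure of $k=\mathbb F_q(T)$ and $t$ a variable. $\bar k[\sigma]$ is the noncommutative polynomial ring with $\sigma x=x^{q^{-1}}\sigma$ ($x\in\bar k$); $\bar k[t,\sigma]$ is obtained by adjoining to $\bar k[\sigma]$ a variable $t$ commuting with $\sigma$ and with $\bar k$. *)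

theory Defs
  imports "HOL-Computational_Algebra.Polynomial"
begin

text \<open>The finite field F_q inside a field K of characteristic p (q a power of p):
  the roots of X^q - X.\<close>
definition Fq_in :: "nat \<Rightarrow> 'k::field set" where
  "Fq_in q = {x. x ^ q = x}"

definition alg_closed_field :: "'k::field itself \<Rightarrow> bool" where
  "alg_closed_field _ \<longleftrightarrow> (\<forall>P :: 'k poly. degree P > 0 \<longrightarrow> (\<exists>x. poly P x = 0))"

text \<open>K is (isomorphic to) an algebraic closure of F_q(T): K has characteristic p,
  q = p^e with e >= 1, K is algebraically closed, contains an element T transcendental
  over F_q, and every element of K is algebraic over F_q(T) (equivalently, is a root of a
  nonzero polynomial with coefficients in F_q[T]).\<close>
definition is_alg_closure_FqT :: "nat \<Rightarrow> 'k::field itself \<Rightarrow> bool" where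
  "is_alg_closure_FqT q K \<longleftrightarrow>
     (\<exists>p e. prime p \<and> e > 0 \<and> q = p ^ e \<and> of_nat p = (0::'k)) \<and>
     alg_closed_field K \<and>
     (\<exists>T::'k.
        (\<forall>P :: 'k poly. (\<forall>i. coeff P i \<in> Fq_in q) \<and> poly P T = 0 \<longrightarrow> P = 0) \<and>
        (\<forall>x::'k. \<exists>P :: 'k poly poly.
            (\<forall>i j. coeff (coeff P i) j \<in> Fq_in q) \<and>
            map_poly (\<lambda>c. poly c T) P \<noteq> 0 \<and>
            poly (map_poly (\<lambda>c. poly c T) P) x = 0))"

text \<open>A left K[t,sigma]-module structure on the K-vector space (M, scale):
  sigma acts additively with sigma x = x^(1/q) sigma, i.e. sigma (x^q m) = x sigma(m)
  (Frobenius is bijective on K), t acts K-linearly and commutes with sigma.\<close>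
definition kt_sigma_module ::
  "nat \<Rightarrow> ('k::field \<Rightarrow> 'm::ab_group_add \<Rightarrow> 'm) \<Rightarrow> ('m \<Rightarrow> 'm) \<Rightarrow> ('m \<Rightarrow> 'm) \<Rightarrow> bool" where
  "kt_sigma_module q scale sig t \<longleftrightarrow>
     vector_space scale \<and>
     (\<forall>a b. sig (a + b) = sig a + sig b) \<and>
     (\<forall>x m. sig (scale (x ^ q) m) = scale x (sig m)) \<and>
     (\<forall>a b. t (a + b) = t a + t b) \<and>
     (\<forall>x m. t (scale x m) = scale x (t m)) \<and>
     (\<forall>m. sig (t m) = t (sig m))"

definition fin_gen_over :: "('k::field \<Rightarrow> 'm::ab_group_add \<Rightarrow> 'm) \<Rightarrow> ('m \<Rightarrow> 'm) \<Rightarrow> bool" where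
  "fin_gen_over scale f \<longleftrightarrow>
     (\<exists>S. finite S \<and> module.span scale {(f ^^ n) s | s n. s \<in> S} = UNIV)"

definition fin_dim_sub :: "('k::field \<Rightarrow> 'm::ab_group_add \<Rightarrow> 'm) \<Rightarrow> 'm set \<Rightarrow> bool" where
  "fin_dim_sub scale N \<longleftrightarrow> (\<exists>B. finite B \<and> module.span scale B = N)"

definition fd_part :: "('k::field \<Rightarrow> 'm::ab_group_add \<Rightarrow> 'm) \<Rightarrow> ('m \<Rightarrow> 'm) \<Rightarrow> 'm set" where
  "fd_part scale f =
     module.span scale (\<Union>{N. module.subspace scale N \<and> f ` N \<subseteq> N \<and> fin_dim_sub scale N})"

text \<open>M/N is a free K[f]-module of finite rank: there are e_0,...,e_(r-1) in M whose
  images form a K[f]-basis of M/N. Since K[f] has left K-basis (f^n)_n, this means that the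
  images of the f^n e_i (i < r, n arbitrary) form a K-basis of M/N: they span M modulo N,
  and every finite K-linear combination of them lying in N is trivial.\<close>
definition free_fin_rank_mod ::
  "('k::field \<Rightarrow> 'm::ab_group_add \<Rightarrow> 'm) \<Rightarrow> ('m \<Rightarrow> 'm) \<Rightarrow> 'm set \<Rightarrow> bool" where
  "free_fin_rank_mod scale f N \<longleftrightarrow>
     (\<exists>(r::nat) (e::nat \<Rightarrow> 'm).
        module.span scale ({(f ^^ n) (e i) | i n. i < r} \<union> N) = UNIV \<and>
        (\<forall>F (c :: nat \<times> nat \<Rightarrow> 'k).
           finite F \<and> F \<subseteq> {..<r} \<times> UNIV \<and>
           (\<Sum>(i, n)\<in>F. scale (c (i, n)) ((f ^^ n) (e i))) \<in> N
           \<longrightarrow> (\<forall>x\<in>F. c x = 0)))"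

end

theory Submission
  imports Defs
begin

text \<open>Write f for \<sigma> or t. Both act additively and semilinearly with respect to a bijective twist
  of the scalars, and M is finitely generated over K[f], say by S. Let V n be the K-span of the
  f^j s with s \<in> S and j \<le> n. A dimension count shows that dim V (n+1) - dim V n is
  non-increasing, hence eventually constant, and from then on f v \<in> V (n+1) forces v \<in> V n.
  So every finite-dimensional f-stable subspace lies in one fixed V N, and the torsion part
  M_f is finite-dimensional. Measuring vectors by their asymptotic degree gives a filtration
  W 0 = M_f \<subseteq> W 1 \<subseteq> ... with f (W n) \<subseteq> W (n+1), f v \<in> W (n+1) only for v \<in> W n,
  and W (n+1) = W n + f (W n) for large n; bases of complements of W n + f (W n) in W (n+1)
  then form a K[f]-basis of M/M_f. Finally M_\<sigma> is finite-dimensional and stable under t,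
  which commutes with \<sigma>, so M_\<sigma> \<subseteq> M_t, and symmetrically.\<close>

text \<open>Linear independence of the family b on I in the quotient by U, without forming the quotient.\<close>
definition independent_modulo ::
  "('k::comm_ring_1 \<Rightarrow> 'm::ab_group_add \<Rightarrow> 'm) \<Rightarrow> 'm set \<Rightarrow> ('i \<Rightarrow> 'm) \<Rightarrow> 'i set \<Rightarrow> bool" where
  "independent_modulo scale U b I \<longleftrightarrow>
     (\<forall>F c. finite F \<longrightarrow> F \<subseteq> I \<longrightarrow> (\<Sum>i\<in>F. scale (c i) (b i)) \<in> U \<longrightarrow> (\<forall>i\<in>F. c i = 0))"

definition finite_dim :: "('k::field \<Rightarrow> 'm::ab_group_add \<Rightarrow> 'm) \<Rightarrow> 'm set \<Rightarrow> bool" where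
  "finite_dim scale X \<longleftrightarrow> (\<exists>B. finite B \<and> X \<subseteq> module.span scale B)"

context module
begin

lemma independent_moduloD:
  assumes "independent_modulo scale U b I" "finite F" "F \<subseteq> I" "(\<Sum>j\<in>F. scale (c j) (b j)) \<in> U" "i \<in> F"
  shows "c i = 0"
  using assms unfolding independent_modulo_def by blast

lemma independent_modulo_finite_subsets:
  "(\<And>F. finite F \<Longrightarrow> F \<subseteq> I \<Longrightarrow> independent_modulo scale U b F) \<Longrightarrow> independent_modulo scale U b I"
  unfolding independent_modulo_def by blast

lemma independent_modulo_subset:
  "independent_modulo scale U b I \<Longrightarrow> J \<subseteq> I \<Longrightarrow> independent_modulo scale U b J"
  unfolding independent_modulo_def by blast

lemma independent_modulo_mono:
  "U \<subseteq> U' \<Longrightarrow> independent_modulo scale U' b I \<Longrightarrow> independent_modulo scale U b I"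
  unfolding independent_modulo_def by blast

lemma independent_modulo_empty: "independent_modulo scale U b {}"
  unfolding independent_modulo_def by blast

lemma independent_modulo_reindex:
  assumes "inj_on h I"
  shows "independent_modulo scale U b (h ` I) \<longleftrightarrow> independent_modulo scale U (\<lambda>i. b (h i)) I"
proof
  assume ind: "independent_modulo scale U b (h ` I)"
  show "independent_modulo scale U (\<lambda>i. b (h i)) I" unfolding independent_modulo_def
  proof (intro allI impI ballI)
    fix F c i
    assume F: "finite F" "F \<subseteq> I" and sum: "(\<Sum>i\<in>F. scale (c i) (b (h i))) \<in> U" and i: "i \<in> F"
    have inj: "inj_on h F" using inj_on_subset[OF assms F(2)] .
    define c' where "c' v = c (the_inv_into F h v)" for v
    have "(\<Sum>v\<in>h ` F. scale (c' v) (b v)) = (\<Sum>j\<in>F. scale (c' (h j)) (b (h j)))"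
      by (rule sum.reindex[OF inj, unfolded comp_def])
    also have "\<dots> = (\<Sum>j\<in>F. scale (c j) (b (h j)))"
      by (rule sum.cong) (simp_all add: c'_def the_inv_into_f_f[OF inj])
    finally have "(\<Sum>v\<in>h ` F. scale (c' v) (b v)) \<in> U" using sum by simp
    moreover have "h ` F \<subseteq> h ` I" using F(2) by (rule image_mono)
    ultimately have "c' (h i) = 0" using independent_moduloD[OF ind] F(1) i by blast
    then show "c i = 0" by (simp add: c'_def the_inv_into_f_f[OF inj i])
  qed
next
  assume ind: "independent_modulo scale U (\<lambda>i. b (h i)) I"
  show "independent_modulo scale U b (h ` I)" unfolding independent_modulo_def
  proof (intro allI impI ballI)
    fix F c v
    assume F: "finite F" "F \<subseteq> h ` I" and sum: "(\<Sum>v\<in>F. scale (c v) (b v)) \<in> U" and v: "v \<in> F"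
    obtain F' where F': "F' \<subseteq> I" "inj_on h F'" "F = h ` F'"
      using F(2) subset_image_inj by metis
    have "finite F'" using F(1) F'(2,3) finite_image_iff by blast
    moreover have "(\<Sum>i\<in>F'. scale (c (h i)) (b (h i))) \<in> U"
      using sum unfolding F'(3) sum.reindex[OF F'(2)] by (simp add: comp_def)
    moreover obtain i where "i \<in> F'" "v = h i" using v F'(3) by blast
    ultimately show "c v = 0" using independent_moduloD[OF ind _ F'(1), where c="\<lambda>i. c (h i)"] by blast
  qed
qed

lemma independent_modulo_Un:
  assumes "subspace U'" "U \<subseteq> U'" "b ` J \<subseteq> U'"
    and "independent_modulo scale U' b I" "independent_modulo scale U b J"
  shows "independent_modulo scale U b (I \<union> J)"
  unfolding independent_modulo_def
proof (intro allI impI ballI)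
  fix F c i assume F: "finite F" "F \<subseteq> I \<union> J" and sum: "(\<Sum>i\<in>F. scale (c i) (b i)) \<in> U" and "i \<in> F"
  let ?s = "\<lambda>G. \<Sum>i\<in>G. scale (c i) (b i)"
  have split: "?s F = ?s (F \<inter> I) + ?s (F - I)" using F(1) by (rule sum.Int_Diff)
  have "?s (F - I) \<in> U'"
    using F assms(3) by (intro subspace_sum[OF assms(1)] subspace_scale[OF assms(1)]) auto
  moreover have "?s F \<in> U'" using sum assms(2) by blast
  ultimately have "?s (F \<inter> I) \<in> U'" using split subspace_diff[OF assms(1)] by (metis add_diff_cancel_right')
  then have I0: "\<forall>i\<in>F \<inter> I. c i = 0" using independent_moduloD[OF assms(4)] F(1) by blast
  then have "?s (F - I) \<in> U" using split sum by simp
  then have "\<forall>i\<in>F - I. c i = 0" using independent_moduloD[OF assms(5)] F by blast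
  then show "c i = 0" using I0 \<open>i \<in> F\<close> by blast
qed

lemma subspace_UN_chain:
  assumes "\<And>k. subspace (A k)" "\<And>k. A k \<subseteq> A (Suc k)"
  shows "subspace (\<Union>k. A k)"
proof (rule subspaceI)
  show "0 \<in> (\<Union>k. A k)" using subspace_0[OF assms(1)] by blast
next
  fix x y assume "x \<in> (\<Union>k. A k)" "y \<in> (\<Union>k. A k)"
  then obtain i j where "x \<in> A i" "y \<in> A j" by blast
  then have "x \<in> A (max i j)" "y \<in> A (max i j)"
    using lift_Suc_mono_le[of A, OF assms(2)] by (meson max.cobounded1 max.cobounded2 subsetD)+
  then show "x + y \<in> (\<Union>k. A k)" using subspace_add[OF assms(1)] by blast
next
  fix c x assume "x \<in> (\<Union>k. A k)"
  then show "scale c x \<in> (\<Union>k. A k)" using subspace_scale[OF assms(1)] by blast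
qed

end

context vector_space
begin

lemma finite_dim_finite: "finite B \<Longrightarrow> finite_dim scale B"
  unfolding finite_dim_def using span_superset by blast

lemma finite_dim_subset: "X \<subseteq> span Y \<Longrightarrow> finite_dim scale Y \<Longrightarrow> finite_dim scale X"
  unfolding finite_dim_def by (meson order_trans span_minimal subspace_span)

lemma finite_dim_Un:
  assumes "finite_dim scale X" "finite_dim scale Y"
  shows "finite_dim scale (X \<union> Y)"
proof -
  obtain B1 B2 where "finite B1" "X \<subseteq> span B1" "finite B2" "Y \<subseteq> span B2"
    using assms unfolding finite_dim_def by blast
  moreover have "span B1 \<union> span B2 \<subseteq> span (B1 \<union> B2)" by (simp add: span_mono)
  ultimately show ?thesis unfolding finite_dim_def by (meson Un_mono finite_UnI order_trans)
qed

lemma finite_dim_basis: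
  assumes "finite_dim scale W"
  obtains B where "finite B" "B \<subseteq> W" "independent B" "W \<subseteq> span B" "card B = dim W"
proof -
  obtain B0 where B0: "finite B0" "W \<subseteq> span B0" using assms unfolding finite_dim_def by blast
  obtain B where B: "B \<subseteq> W" "independent B" "W \<subseteq> span B" "card B = dim W" by (rule basis_exists)
  have "finite B" using independent_span_bound[OF B0(1) B(2)] B(1) B0(2) by blast
  with B that show ?thesis by blast
qed

lemma fin_dim_sub_iff: "fin_dim_sub scale N \<longleftrightarrow> subspace N \<and> finite_dim scale N"
proof
  assume "fin_dim_sub scale N"
  then show "subspace N \<and> finite_dim scale N"
    unfolding fin_dim_sub_def finite_dim_def by auto
next
  assume N: "subspace N \<and> finite_dim scale N"
  then obtain B where "finite B" "B \<subseteq> N" "N \<subseteq> span B" using finite_dim_basis by metis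
  then show "fin_dim_sub scale N" unfolding fin_dim_sub_def using span_subspace N by blast
qed

lemma dim_le_finite_dim:
  assumes "V \<subseteq> span W" "finite_dim scale W"
  shows "dim V \<le> dim W"
proof -
  obtain B where B: "finite B" "B \<subseteq> W" "W \<subseteq> span B" "card B = dim W"
    using finite_dim_basis[OF assms(2)] by metis
  have "V \<subseteq> span B" using assms(1) B(3) by (meson order_trans span_minimal subspace_span)
  then have "dim V \<le> card B" using B(1) by (rule dim_le_card)
  with B(4) show ?thesis by simp
qed

lemma dim_Un_le:
  assumes "finite_dim scale X" "finite Y"
  shows "dim (X \<union> Y) \<le> dim X + card Y"
proof -
  obtain B where B: "finite B" "X \<subseteq> span B" "card B = dim X"
    using finite_dim_basis[OF assms(1)] by metis
  have "X \<union> Y \<subseteq> span (B \<union> Y)" using B(2) span_mono[of B "B \<union> Y"] span_superset[of "B \<union> Y"] by blast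
  then have "dim (X \<union> Y) \<le> card (B \<union> Y)" using dim_le_card B(1) assms(2) by blast
  also have "\<dots> \<le> card B + card Y" by (rule card_Un_le)
  finally show ?thesis using B(3) by simp
qed

lemma dim_insert_finite_dim:
  assumes "x \<notin> span S" "finite_dim scale S"
  shows "dim (insert x S) = Suc (dim S)"
proof -
  obtain B where B: "finite B" "B \<subseteq> S" "independent B" "S \<subseteq> span B" "card B = dim S"
    using finite_dim_basis[OF assms(2)] by blast
  have xB: "x \<notin> span B" using assms(1) span_mono[OF B(2)] by blast
  have "dim (insert x S) = card (insert x B)"
  proof (rule dim_unique)
    show "insert x S \<subseteq> span (insert x B)"
      using B(4) span_mono[of B "insert x B"] span_superset[of "insert x B"] by blast
  qed (use B(2) independent_insertI[OF xB B(3)] in auto)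
  moreover have "x \<notin> B" using xB span_superset[of B] by blast
  ultimately show ?thesis using B(1,5) by simp
qed

lemma independent_modulo_Diff:
  assumes "independent G" "finite G" "A \<subseteq> G"
  shows "independent_modulo scale (span A) (\<lambda>v. v) (G - A)"
  unfolding independent_modulo_def
proof (intro allI impI ballI)
  fix F c v assume F: "finite F" "F \<subseteq> G - A" and sum: "(\<Sum>v\<in>F. scale (c v) v) \<in> span A" and "v \<in> F"
  have finA: "finite A" using finite_subset[OF assms(3,2)] .
  obtain d where d: "(\<Sum>v\<in>F. scale (c v) v) = (\<Sum>v\<in>A. scale (d v) v)"
    using sum span_finite[OF finA] by blast
  define e where "e v = (if v \<in> F then c v else - d v)" for v
  have disj: "F \<inter> A = {}" using F(2) by blast
  have "(\<Sum>v\<in>F \<union> A. scale (e v) v) = (\<Sum>v\<in>F. scale (e v) v) + (\<Sum>v\<in>A. scale (e v) v)"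
    by (rule sum.union_disjoint[OF F(1) finA disj])
  also have "(\<Sum>v\<in>F. scale (e v) v) = (\<Sum>v\<in>F. scale (c v) v)"
    by (rule sum.cong) (simp_all add: e_def)
  also have "(\<Sum>v\<in>A. scale (e v) v) = - (\<Sum>v\<in>A. scale (d v) v)"
    unfolding sum_negf[symmetric] using disj by (intro sum.cong) (auto simp: e_def scale_minus_left)
  finally have "(\<Sum>v\<in>F \<union> A. scale (e v) v) = 0" using d by simp
  moreover have "F \<union> A \<subseteq> G" using F(2) assms(3) by blast
  ultimately have "e v = 0" using independentD[OF assms(1)] F(1) finA \<open>v \<in> F\<close> by blast
  then show "c v = 0" using \<open>v \<in> F\<close> by (simp add: e_def)
qed

lemma complement_exists:
  assumes "A \<subseteq> B" "finite_dim scale B"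
  obtains C where "finite C" "C \<subseteq> B" "B \<subseteq> span (A \<union> C)" "dim A + card C = dim B"
    "independent_modulo scale (span A) (\<lambda>v. v) C"
proof -
  obtain \<alpha> where \<alpha>: "\<alpha> \<subseteq> A" "independent \<alpha>" "A \<subseteq> span \<alpha>" "card \<alpha> = dim A"
    by (rule basis_exists)
  obtain \<gamma> where \<gamma>: "\<alpha> \<subseteq> \<gamma>" "\<gamma> \<subseteq> B" "independent \<gamma>" "B \<subseteq> span \<gamma>"
    using maximal_independent_subset_extend[OF subset_trans[OF \<alpha>(1) assms(1)] \<alpha>(2)] by blast
  obtain B0 where B0: "finite B0" "B \<subseteq> span B0" using assms(2) unfolding finite_dim_def by blast
  have fin\<gamma>: "finite \<gamma>" using independent_span_bound[OF B0(1) \<gamma>(3)] \<gamma>(2) B0(2) by blast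
  have fin\<alpha>: "finite \<alpha>" using finite_subset[OF \<gamma>(1) fin\<gamma>] .
  define C where "C = \<gamma> - \<alpha>"
  have "finite C" "C \<subseteq> B" using fin\<gamma> \<gamma>(2) by (auto simp: C_def)
  moreover have "B \<subseteq> span (A \<union> C)"
    using \<gamma>(4) span_mono[of \<gamma> "A \<union> C"] \<alpha>(1) by (auto simp: C_def)
  moreover have "dim A + card C = dim B"
    using basis_card_eq_dim[OF \<gamma>(2,4,3)] card_Diff_subset[OF fin\<alpha> \<gamma>(1)] card_mono[OF fin\<gamma> \<gamma>(1)] \<alpha>(4)
    by (simp add: C_def)
  moreover have "independent_modulo scale (span A) (\<lambda>v. v) C"
    unfolding C_def using span_minimal[OF \<alpha>(3) subspace_span]
    by (rule independent_modulo_mono[OF _ independent_modulo_Diff[OF \<gamma>(3) fin\<gamma> \<gamma>(1)]])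
  ultimately show ?thesis using that by blast
qed

lemma subspace_eq_of_dim_le:
  assumes "subspace A" "A \<subseteq> B" "finite_dim scale B" "dim B \<le> dim A"
  shows "B = A"
proof -
  obtain C where C: "finite C" "B \<subseteq> span (A \<union> C)" "dim A + card C = dim B"
    using complement_exists[OF assms(2,3)] by metis
  then have "card C = 0" using assms(4) by linarith
  then have "C = {}" using C(1) by simp
  then have "B \<subseteq> span A" using C(2) by simp
  then show ?thesis using assms(1,2) span_eq_iff[of A] by blast
qed

lemma decreasing_subspaces_stabilize:
  assumes "\<And>c. subspace (Y c)" "\<And>c. Y (Suc c) \<subseteq> Y c" "finite_dim scale (Y 0)"
  shows "\<exists>c. Y (Suc c) = Y c"
proof -
  have "Y c \<subseteq> Y 0" for c
    using decseqD[OF decseq_SucI[of Y, OF assms(2)], of 0 c] by simp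
  then have fd: "finite_dim scale (Y c)" for c
    using finite_dim_subset[OF _ assms(3)] span_superset[of "Y 0"] by blast
  obtain c where c: "\<And>c'. dim (Y c) \<le> dim (Y c')"
    using ex_has_least_nat[of "\<lambda>_. True" 0 "\<lambda>c. dim (Y c)"] by auto
  have "Y c = Y (Suc c)" by (rule subspace_eq_of_dim_le[OF assms(1) assms(2) fd c])
  then show ?thesis by metis
qed

lemma free_fin_rank_modI:
  fixes g :: "'i \<Rightarrow> 'b"
  assumes "finite X"
    and span: "span ((\<lambda>(x, n). (f ^^ n) (g x)) ` (X \<times> UNIV) \<union> N) = UNIV"
    and ind: "independent_modulo scale N (\<lambda>(x, n). (f ^^ n) (g x)) (X \<times> UNIV)"
  shows "free_fin_rank_mod scale f N"
proof -
  obtain e where e: "bij_betw e {..<card X} X"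
    using ex_bij_betw_nat_finite[OF assms(1)] by (auto simp: atLeast0LessThan)
  let ?h = "map_prod e id"
  have inj: "inj_on ?h ({..<card X} \<times> UNIV)"
    by (rule map_prod_inj_on[OF bij_betw_imp_inj_on[OF e] inj_on_id])
  have h_image: "?h ` ({..<card X} \<times> UNIV) = X \<times> UNIV"
    by (rule map_prod_surj_on[OF bij_betw_imp_surj_on[OF e]]) simp
  have "{(f ^^ n) (g (e i)) | i n. i < card X} =
      (\<lambda>(x, n). (f ^^ n) (g x)) ` ?h ` ({..<card X} \<times> UNIV)"
  proof (intro equalityI subsetI)
    fix y assume "y \<in> {(f ^^ n) (g (e i)) | i n. i < card X}"
    then obtain i n where "i < card X" "y = (f ^^ n) (g (e i))" by blast
    then show "y \<in> (\<lambda>(x, n). (f ^^ n) (g x)) ` ?h ` ({..<card X} \<times> UNIV)"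
      by (intro image_eqI[of _ _ "(e i, n)"] image_eqI[of _ _ "(i, n)"]) auto
  qed auto
  then have gens: "{(f ^^ n) (g (e i)) | i n. i < card X} = (\<lambda>(x, n). (f ^^ n) (g x)) ` (X \<times> UNIV)"
    unfolding h_image .
  have ind': "independent_modulo scale N (\<lambda>p. (f ^^ snd p) (g (e (fst p)))) ({..<card X} \<times> UNIV)"
    using ind unfolding h_image[symmetric] independent_modulo_reindex[OF inj] by (simp add: split_def)
  show ?thesis unfolding free_fin_rank_mod_def
  proof (intro exI conjI allI impI)
    show "span ({(f ^^ n) (g (e i)) | i n. i < card X} \<union> N) = UNIV" using span gens by simp
  next
    fix F and c :: "nat \<times> nat \<Rightarrow> 'a"
    assume "finite F \<and> F \<subseteq> {..<card X} \<times> UNIV \<and> (\<Sum>(i, n)\<in>F. scale (c (i, n)) ((f ^^ n) (g (e i)))) \<in> N"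
    then show "\<forall>x\<in>F. c x = 0"
      using independent_moduloD[OF ind', where c=c] by (auto simp: split_def)
  qed
qed

end

text \<open>Semilinearity f (c v) = \<theta> c \<cdot> f v for a surjective twist \<theta> of the scalars with
  \<theta> 0 = 0, stated without naming \<theta>; for \<sigma> it is \<theta> x = x^(1/q).\<close>
locale semilinear_endo = vector_space scale for scale :: "'k::field \<Rightarrow> 'm::ab_group_add \<Rightarrow> 'm" +
  fixes f :: "'m \<Rightarrow> 'm"
  assumes add: "f (u + v) = f u + f v"
    and scale_image: "\<exists>c'. \<forall>v. f (scale c v) = scale c' (f v)"
    and scale_preimage: "\<exists>c'. (c' = 0 \<longrightarrow> c = 0) \<and> (\<forall>v. f (scale c' v) = scale c (f v))"
begin

sublocale f: additive f
  by unfold_locales (rule add)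

lemma image_span: "f ` span X = span (f ` X)"
proof
  show "f ` span X \<subseteq> span (f ` X)"
  proof clarify
    fix x assume "x \<in> span X"
    then show "f x \<in> span (f ` X)"
    proof (induction rule: span_induct_alt)
      case base then show ?case by (simp add: f.zero span_zero)
    next
      case (step c x y)
      obtain c' where "\<forall>v. f (scale c v) = scale c' (f v)" using scale_image by blast
      with step show ?case by (simp add: add span_add span_scale span_base)
    qed
  qed
  show "span (f ` X) \<subseteq> f ` span X"
  proof
    fix y assume "y \<in> span (f ` X)"
    then show "y \<in> f ` span X"
    proof (induction rule: span_induct_alt)
      case base then show ?case using f.zero span_zero by (metis image_eqI)
    next
      case (step c x y)
      obtain c' where c': "\<forall>v. f (scale c' v) = scale c (f v)" using scale_preimage by blast
      obtain x0 y0 where "x0 \<in> X" "x = f x0" "y0 \<in> span X" "y = f y0" using step by blast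
      then have "scale c x + y = f (scale c' x0 + y0)" "scale c' x0 + y0 \<in> span X"
        using c' by (simp_all add: add span_add span_scale span_base)
      then show ?case by blast
    qed
  qed
qed

lemma subspace_vimage: "subspace U \<Longrightarrow> subspace (f -` U)"
proof (rule subspaceI)
  assume U: "subspace U"
  show "0 \<in> f -` U" using subspace_0[OF U] by (simp add: f.zero)
  show "x + y \<in> f -` U" if "x \<in> f -` U" "y \<in> f -` U" for x y
    using subspace_add[OF U] that by (simp add: add)
  show "scale c x \<in> f -` U" if "x \<in> f -` U" for c x
  proof -
    obtain c' where "\<forall>v. f (scale c v) = scale c' (f v)" using scale_image by blast
    then show ?thesis using subspace_scale[OF U] that by simp
  qed
qed

lemma subspace_vimage_funpow: "subspace U \<Longrightarrow> subspace ((f ^^ k) -` U)"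
proof (induction k arbitrary: U)
  case (Suc k)
  have "(f ^^ Suc k) -` U = (f ^^ k) -` (f -` U)" by auto
  moreover have "subspace ((f ^^ k) -` (f -` U))" using Suc subspace_vimage by blast
  ultimately show ?case by (simp only:)
qed simp

lemma independent_modulo_image:
  assumes ind: "independent_modulo scale U b I" and pre: "\<And>v. f v \<in> U' \<Longrightarrow> v \<in> U"
  shows "independent_modulo scale U' (\<lambda>i. f (b i)) I"
  unfolding independent_modulo_def
proof (intro allI impI ballI)
  fix F c i assume F: "finite F" "F \<subseteq> I" and sum: "(\<Sum>i\<in>F. scale (c i) (f (b i))) \<in> U'" and "i \<in> F"
  obtain g where g: "\<And>c. g c = 0 \<longrightarrow> c = 0" "\<And>c v. f (scale (g c) v) = scale c (f v)"
    using scale_preimage by metis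
  have "f (\<Sum>i\<in>F. scale (g (c i)) (b i)) = (\<Sum>i\<in>F. scale (c i) (f (b i)))"
    by (simp add: f.sum g(2))
  then have "(\<Sum>i\<in>F. scale (g (c i)) (b i)) \<in> U" using sum pre by simp
  then show "c i = 0"
    using independent_moduloD[OF ind F, where c="\<lambda>i. g (c i)"] g(1) \<open>i \<in> F\<close> by blast
qed

text \<open>Since f A \<subseteq> A', modulo A' the space f B is spanned by the image of a complement of A
  in B.\<close>
lemma dim_image_extension_le:
  assumes "A \<subseteq> B" "finite_dim scale B" "f ` A \<subseteq> A'" "finite_dim scale A'" "B' \<subseteq> span (A' \<union> f ` B)"
  shows "dim B' + dim A \<le> dim A' + dim B"
proof -
  obtain C where C: "finite C" "B \<subseteq> span (A \<union> C)" "dim A + card C = dim B"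
    using complement_exists[OF assms(1,2)] by metis
  have "f ` B \<subseteq> f ` span (A \<union> C)" using C(2) by (rule image_mono)
  also have "\<dots> = span (f ` A \<union> f ` C)" by (simp add: image_span image_Un)
  also have "\<dots> \<subseteq> span (A' \<union> f ` C)" using assms(3) by (intro span_mono) blast
  finally have "A' \<union> f ` B \<subseteq> span (A' \<union> f ` C)" using span_superset[of "A' \<union> f ` C"] by blast
  then have "B' \<subseteq> span (A' \<union> f ` C)" using assms(5) span_minimal[OF _ subspace_span] by blast
  then have "dim B' \<le> dim (A' \<union> f ` C)"
    using dim_le_finite_dim finite_dim_Un[OF assms(4) finite_dim_finite] C(1) by blast
  also have "\<dots> \<le> dim A' + card (f ` C)" using dim_Un_le[OF assms(4)] C(1) by blast
  also have "card (f ` C) \<le> card C" using C(1) by (rule card_image_le)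
  finally show ?thesis using C(3) by linarith
qed

lemma stable_subspace_le_fd_part:
  assumes "subspace N" "f ` N \<subseteq> N" "finite_dim scale N"
  shows "N \<subseteq> fd_part scale f"
proof -
  have "N \<in> {N. subspace N \<and> f ` N \<subseteq> N \<and> fin_dim_sub scale N}"
    using assms by (simp add: fin_dim_sub_iff)
  then have "N \<subseteq> \<Union>{N. subspace N \<and> f ` N \<subseteq> N \<and> fin_dim_sub scale N}" by (rule Union_upper)
  also have "\<dots> \<subseteq> fd_part scale f" unfolding fd_part_def by (rule span_superset)
  finally show ?thesis .
qed

lemma fd_part_least:
  assumes "subspace Y" "\<And>N. subspace N \<Longrightarrow> f ` N \<subseteq> N \<Longrightarrow> finite_dim scale N \<Longrightarrow> N \<subseteq> Y"
  shows "fd_part scale f \<subseteq> Y"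
  unfolding fd_part_def
proof (rule span_minimal[OF _ assms(1)])
  show "\<Union>{N. subspace N \<and> f ` N \<subseteq> N \<and> fin_dim_sub scale N} \<subseteq> Y"
  proof (rule Union_least)
    fix N assume "N \<in> {N. subspace N \<and> f ` N \<subseteq> N \<and> fin_dim_sub scale N}"
    then show "N \<subseteq> Y" using assms(2) by (simp add: fin_dim_sub_iff)
  qed
qed

lemma subspace_fd_part: "subspace (fd_part scale f)"
  unfolding fd_part_def by (rule subspace_span)

lemma image_fd_part_commuting:
  assumes "semilinear_endo scale h" "\<And>v. f (h v) = h (f v)"
  shows "h ` fd_part scale f \<subseteq> fd_part scale f"
proof -
  interpret h: semilinear_endo scale h by (rule assms(1))
  define Fam where "Fam = {N. subspace N \<and> f ` N \<subseteq> N \<and> fin_dim_sub scale N}"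
  have image_Fam: "h ` N \<in> Fam" if N: "N \<in> Fam" for N
  proof -
    obtain B where B: "finite B" "span B = N" using N unfolding Fam_def fin_dim_sub_def by blast
    have hN: "h ` N = span (h ` B)" using h.image_span[of B] B(2) by simp
    have "f ` h ` N = h ` f ` N" unfolding image_image assms(2) ..
    also have "\<dots> \<subseteq> h ` N" using N unfolding Fam_def by (intro image_mono) simp
    finally have "f ` h ` N \<subseteq> h ` N" .
    moreover have "fin_dim_sub scale (h ` N)" unfolding fin_dim_sub_def hN using B(1) by blast
    moreover have "subspace (h ` N)" unfolding hN by (rule subspace_span)
    ultimately show ?thesis unfolding Fam_def by blast
  qed
  have "h ` \<Union>Fam \<subseteq> \<Union>Fam"
  proof
    fix y assume "y \<in> h ` \<Union>Fam"
    then obtain N x where "N \<in> Fam" "x \<in> N" "y = h x" by blast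
    then show "y \<in> \<Union>Fam" using UnionI[OF image_Fam imageI] by blast
  qed
  then have "span (h ` \<Union>Fam) \<subseteq> span (\<Union>Fam)" by (rule span_mono)
  then show ?thesis unfolding fd_part_def Fam_def[symmetric] h.image_span .
qed

lemma semilinear_endo: "semilinear_endo scale f"
  by intro_locales

lemma image_fd_part: "f ` fd_part scale f \<subseteq> fd_part scale f"
  using image_fd_part_commuting[OF semilinear_endo] by blast

lemma fd_part_le_fd_part_commuting:
  assumes "fin_dim_sub scale (fd_part scale f)" "semilinear_endo scale h" "\<And>v. f (h v) = h (f v)"
  shows "fd_part scale f \<subseteq> fd_part scale h"
proof -
  interpret h: semilinear_endo scale h by (rule assms(2))
  show ?thesis
  proof (rule h.stable_subspace_le_fd_part)
    show "subspace (fd_part scale f)" by (rule subspace_fd_part)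
    show "h ` fd_part scale f \<subseteq> fd_part scale f" by (rule image_fd_part_commuting[OF assms(2,3)])
    show "finite_dim scale (fd_part scale f)" using assms(1) by (simp add: fin_dim_sub_iff)
  qed
qed

end

locale good_filtration = semilinear_endo scale f
  for scale :: "'k::field \<Rightarrow> 'm::ab_group_add \<Rightarrow> 'm" and f +
  fixes W :: "nat \<Rightarrow> 'm set" and L :: nat
  assumes subspace_W: "subspace (W n)"
    and W_Suc: "W n \<subseteq> W (Suc n)"
    and image_W0: "f ` W 0 \<subseteq> W 0"
    and image_W: "f ` W n \<subseteq> W (Suc n)"
    and vimage_W: "f v \<in> W (Suc n) \<Longrightarrow> v \<in> W n"
    and W_exhaustive: "\<exists>n. v \<in> W n"
    and finite_dim_W: "finite_dim scale (W n)"
    and W_generated: "L \<le> n \<Longrightarrow> W (Suc n) \<subseteq> span (W n \<union> f ` W n)"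
begin

lemma W_mono: "m \<le> n \<Longrightarrow> W m \<subseteq> W n"
  using lift_Suc_mono_le[of W, OF W_Suc] .

lemma funpow_in_W: "v \<in> W n \<Longrightarrow> (f ^^ k) v \<in> W (n + k)"
  by (induction k) (use image_W in auto)

definition fresh :: "nat \<Rightarrow> 'm set" where
  "fresh n = (SOME C. finite C \<and> C \<subseteq> W (Suc n) \<and> W (Suc n) \<subseteq> span (W n \<union> f ` W n \<union> C) \<and>
     independent_modulo scale (span (W n \<union> f ` W n)) (\<lambda>v. v) C)"

lemma fresh:
  "finite (fresh n)" "fresh n \<subseteq> W (Suc n)" "W (Suc n) \<subseteq> span (W n \<union> f ` W n \<union> fresh n)"
  "independent_modulo scale (span (W n \<union> f ` W n)) (\<lambda>v. v) (fresh n)"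
proof -
  have "W n \<union> f ` W n \<subseteq> W (Suc n)" using W_Suc image_W by blast
  then obtain C where "finite C" "C \<subseteq> W (Suc n)" "W (Suc n) \<subseteq> span (W n \<union> f ` W n \<union> C)"
    "independent_modulo scale (span (W n \<union> f ` W n)) (\<lambda>v. v) C"
    using complement_exists[OF _ finite_dim_W] by metis
  then have "\<exists>C. finite C \<and> C \<subseteq> W (Suc n) \<and> W (Suc n) \<subseteq> span (W n \<union> f ` W n \<union> C) \<and>
     independent_modulo scale (span (W n \<union> f ` W n)) (\<lambda>v. v) C" by blast
  from someI_ex[OF this] show
    "finite (fresh n)" "fresh n \<subseteq> W (Suc n)" "W (Suc n) \<subseteq> span (W n \<union> f ` W n \<union> fresh n)"
    "independent_modulo scale (span (W n \<union> f ` W n)) (\<lambda>v. v) (fresh n)"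
    unfolding fresh_def by blast+
qed

lemma fresh_eq_empty:
  assumes "L \<le> n"
  shows "fresh n = {}"
proof (rule ccontr)
  assume "fresh n \<noteq> {}"
  then obtain v where v: "v \<in> fresh n" by blast
  then have "(\<Sum>u\<in>{v}. scale 1 u) \<in> span (W n \<union> f ` W n)"
    using fresh(2) W_generated[OF assms] by auto
  then have "(1::'k) = 0"
    using independent_moduloD[OF fresh(4)[of n], where F="{v}" and c="\<lambda>_. 1"] v by simp
  then show False by simp
qed

definition fresh_index :: "(nat \<times> 'm) set" where
  "fresh_index = (SIGMA l:UNIV. fresh l)"

lemma finite_fresh_index: "finite fresh_index"
proof -
  have "fresh_index \<subseteq> (SIGMA l:{..<L}. fresh l)"
  proof
    fix p assume "p \<in> fresh_index"
    then obtain l u where p: "p = (l, u)" "u \<in> fresh l" by (auto simp: fresh_index_def)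
    then have "l < L" using fresh_eq_empty[of l] by (cases "L \<le> l") auto
    with p show "p \<in> (SIGMA l:{..<L}. fresh l)" by simp
  qed
  then show ?thesis by (rule finite_subset) (simp add: fresh(1))
qed

text \<open>The candidate K[f]-basis of M / W 0 consists of the f^n u with u \<in> fresh l, indexed by
  ((l, u), n) and graded by l + n.\<close>
definition orbit :: "(nat \<times> 'm) \<times> nat \<Rightarrow> 'm" where
  "orbit = (\<lambda>(x, n). (f ^^ n) (snd x))"

lemma orbit_Suc: "orbit (x, Suc n) = f (orbit (x, n))"
  by (simp add: orbit_def)

definition layer :: "nat \<Rightarrow> ((nat \<times> 'm) \<times> nat) set" where
  "layer K = {((l, u), n). u \<in> fresh l \<and> l + n = K}"

lemma orbit_in_W: "u \<in> fresh l \<Longrightarrow> orbit ((l, u), n) \<in> W (Suc (l + n))"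
  unfolding orbit_def using funpow_in_W fresh(2) by fastforce

text \<open>The degree-K vectors with n = 0 are fresh, hence independent modulo W K + f (W K);
  the others lie in f (W K).\<close>
lemma independent_layer_step:
  assumes "independent_modulo scale (W K) orbit {p \<in> layer K. snd p \<noteq> 0}"
  shows "independent_modulo scale (W K) orbit (layer K)"
proof -
  define U' where "U' = span (W K \<union> f ` W K)"
  have "inj_on (\<lambda>u. ((K, u), 0::nat)) (fresh K)" by (simp add: inj_on_def)
  then have top: "independent_modulo scale U' orbit ((\<lambda>u. ((K, u), 0)) ` fresh K)"
    using fresh(4) unfolding U'_def by (simp add: independent_modulo_reindex orbit_def)
  have "orbit p \<in> U'" if hp: "p \<in> layer K" "snd p \<noteq> 0" for p
  proof -
    obtain l u n where p0: "p = ((l, u), n)" using prod.exhaust by metis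
    with hp(1) have "u \<in> fresh l" "l + n = K" by (simp_all add: layer_def)
    obtain m where "n = Suc m" using hp(2) p0 by (cases n) auto
    with p0 \<open>u \<in> fresh l\<close> \<open>l + n = K\<close>
    have p: "p = ((l, u), Suc m)" "u \<in> fresh l" "l + Suc m = K" by simp_all
    have "orbit ((l, u), m) \<in> W K" using orbit_in_W[OF p(2), of m] p(3) by simp
    moreover have "orbit p = f (orbit ((l, u), m))" using p(1) by (simp add: orbit_Suc)
    ultimately have "orbit p \<in> W K \<union> f ` W K" by simp
    then show ?thesis unfolding U'_def by (rule span_base)
  qed
  then have "orbit ` {p \<in> layer K. snd p \<noteq> 0} \<subseteq> U'" by blast
  moreover have "W K \<subseteq> U'" unfolding U'_def using span_superset by blast
  ultimately have "independent_modulo scale (W K) orbit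
      ((\<lambda>u. ((K, u), 0)) ` fresh K \<union> {p \<in> layer K. snd p \<noteq> 0})"
    using independent_modulo_Un[OF _ _ _ top assms] unfolding U'_def by (simp add: subspace_span)
  moreover have "(\<lambda>u. ((K, u), 0)) ` fresh K \<union> {p \<in> layer K. snd p \<noteq> 0} = layer K"
    unfolding layer_def by auto
  ultimately show ?thesis by simp
qed

lemma independent_layer: "independent_modulo scale (W K) orbit (layer K)"
proof (induction K)
  case 0
  have "{p \<in> layer 0. snd p \<noteq> 0} = {}" unfolding layer_def by auto
  then have "independent_modulo scale (W 0) orbit {p \<in> layer 0. snd p \<noteq> 0}"
    by (simp only: independent_modulo_empty)
  then show ?case by (rule independent_layer_step)
next
  case (Suc K)
  define shift where "shift p = (fst p, Suc (snd p))" for p :: "(nat \<times> 'm) \<times> nat"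
  have inj: "inj_on shift (layer K)" by (simp add: inj_on_def shift_def prod_eq_iff)
  have orbit_shift: "orbit (shift p) = f (orbit p)" for p
    using orbit_Suc[of "fst p" "snd p"] by (simp add: shift_def)
  have "independent_modulo scale (W (Suc K)) orbit (shift ` layer K)"
    unfolding independent_modulo_reindex[OF inj] orbit_shift
    by (rule independent_modulo_image[OF Suc.IH vimage_W])
  moreover have "shift ` layer K = {p \<in> layer (Suc K). snd p \<noteq> 0}"
  proof (intro equalityI subsetI)
    fix p assume "p \<in> {p \<in> layer (Suc K). snd p \<noteq> 0}"
    moreover obtain l u n where p: "p = ((l, u), n)" using prod.exhaust by metis
    ultimately have "u \<in> fresh l" "l + n = Suc K" "n \<noteq> 0" by (simp_all add: layer_def)
    then obtain m where "n = Suc m" by (cases n) auto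
    with p \<open>u \<in> fresh l\<close> \<open>l + n = Suc K\<close>
    have "p = shift ((l, u), m)" "((l, u), m) \<in> layer K" by (simp_all add: shift_def layer_def)
    then show "p \<in> shift ` layer K" by (rule image_eqI)
  next
    fix p assume "p \<in> shift ` layer K"
    then obtain q where q: "q \<in> layer K" "p = shift q" by (rule imageE)
    moreover obtain l u n where "q = ((l, u), n)" using prod.exhaust by metis
    ultimately show "p \<in> {p \<in> layer (Suc K). snd p \<noteq> 0}" by (simp add: layer_def shift_def)
  qed
  ultimately have "independent_modulo scale (W (Suc K)) orbit {p \<in> layer (Suc K). snd p \<noteq> 0}"
    by simp
  then show ?case by (rule independent_layer_step)
qed

lemma independent_layers_below: "independent_modulo scale (W 0) orbit (\<Union>K'<K. layer K')"
proof (induction K)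
  case 0
  show ?case by (simp add: independent_modulo_empty)
next
  case (Suc K)
  have "orbit ` (\<Union>K'<K. layer K') \<subseteq> W K"
  proof
    fix y assume "y \<in> orbit ` (\<Union>K'<K. layer K')"
    then obtain p K' where "K' < K" "p \<in> layer K'" "y = orbit p" by blast
    moreover obtain l u n where "p = ((l, u), n)" using prod.exhaust by metis
    ultimately have "y \<in> W (Suc K')" using orbit_in_W[of u l n] by (simp add: layer_def)
    then show "y \<in> W K" using W_mono[of "Suc K'" K] \<open>K' < K\<close> by auto
  qed
  then have "independent_modulo scale (W 0) orbit (layer K \<union> (\<Union>K'<K. layer K'))"
    using independent_modulo_Un[OF subspace_W W_mono[of 0 K] _ independent_layer Suc.IH] by simp
  then show ?case by (simp add: lessThan_Suc)
qed

lemma independent_orbit: "independent_modulo scale (W 0) orbit (fresh_index \<times> UNIV)"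
proof (rule independent_modulo_finite_subsets)
  fix F :: "((nat \<times> 'm) \<times> nat) set"
  assume F: "finite F" "F \<subseteq> fresh_index \<times> UNIV"
  obtain K where K: "\<forall>d \<in> (\<lambda>p. fst (fst p) + snd p) ` F. d < K"
    using F(1) finite_nat_set_iff_bounded by blast
  have "F \<subseteq> (\<Union>K'<K. layer K')"
  proof
    fix p assume "p \<in> F"
    moreover obtain l u n where p: "p = ((l, u), n)" using prod.exhaust by metis
    ultimately have "u \<in> fresh l" "l + n < K" using F(2) K by (auto simp: fresh_index_def)
    then show "p \<in> (\<Union>K'<K. layer K')" using p by (auto simp: layer_def)
  qed
  then show "independent_modulo scale (W 0) orbit F"
    by (rule independent_modulo_subset[OF independent_layers_below])
qed

lemma span_orbit: "span (orbit ` (fresh_index \<times> UNIV) \<union> W 0) = UNIV"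
proof -
  define Z where "Z = span (orbit ` (fresh_index \<times> UNIV) \<union> W 0)"
  have "f ` (orbit ` (fresh_index \<times> UNIV) \<union> W 0) \<subseteq> orbit ` (fresh_index \<times> UNIV) \<union> W 0"
  proof
    fix y assume "y \<in> f ` (orbit ` (fresh_index \<times> UNIV) \<union> W 0)"
    then consider p where "p \<in> fresh_index \<times> UNIV" "y = f (orbit p)" | v where "v \<in> W 0" "y = f v"
      by blast
    then show "y \<in> orbit ` (fresh_index \<times> UNIV) \<union> W 0"
    proof cases
      case 1
      then have "y = orbit (fst p, Suc (snd p))" using orbit_Suc[of "fst p" "snd p"] by simp
      moreover have "(fst p, Suc (snd p)) \<in> fresh_index \<times> UNIV" using 1 by auto
      ultimately have "y \<in> orbit ` (fresh_index \<times> UNIV)" by (rule image_eqI)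
      then show ?thesis by (rule UnI1)
    next
      case 2
      then show ?thesis using image_W0 by auto
    qed
  qed
  then have image_Z: "f ` Z \<subseteq> Z" unfolding Z_def image_span by (rule span_mono)
  have "W n \<subseteq> Z" for n
  proof (induction n)
    case 0
    show ?case unfolding Z_def using span_superset by blast
  next
    case (Suc n)
    have "fresh n \<subseteq> Z"
    proof
      fix u assume "u \<in> fresh n"
      then have "orbit ((n, u), 0) \<in> orbit ` (fresh_index \<times> UNIV)" by (simp add: fresh_index_def)
      then show "u \<in> Z" unfolding Z_def by (simp add: orbit_def span_base)
    qed
    moreover have "f ` W n \<subseteq> Z" using Suc.IH image_Z by blast
    ultimately have "span (W n \<union> f ` W n \<union> fresh n) \<subseteq> Z"
      using Suc.IH unfolding Z_def by (intro span_minimal) auto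
    then show ?case using fresh(3) by blast
  qed
  then show ?thesis using W_exhaustive unfolding Z_def by blast
qed

theorem free_fin_rank_mod_W0: "free_fin_rank_mod scale f (W 0)"
  using span_orbit independent_orbit unfolding orbit_def
  by (rule free_fin_rank_modI[OF finite_fresh_index])

end

lemma funpow_in_invariant: "f ` N \<subseteq> N \<Longrightarrow> v \<in> N \<Longrightarrow> (f ^^ k) v \<in> N"
  by (induction k) auto

locale fin_gen_semilinear_endo = semilinear_endo scale f
  for scale :: "'k::field \<Rightarrow> 'm::ab_group_add \<Rightarrow> 'm" and f +
  fixes S :: "'m set"
  assumes finite_S: "finite S"
    and span_orbits_S: "span {(f ^^ n) s | s n. s \<in> S} = UNIV"
begin

definition orbit_span :: "nat \<Rightarrow> 'm set" where
  "orbit_span n = span {(f ^^ j) s | s j. s \<in> S \<and> j \<le> n}"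

lemma subspace_orbit_span: "subspace (orbit_span n)"
  by (simp add: orbit_span_def)

lemma finite_dim_orbit_span: "finite_dim scale (orbit_span n)"
proof -
  have "{(f ^^ j) s | s j. s \<in> S \<and> j \<le> n} = (\<lambda>(s, j). (f ^^ j) s) ` (S \<times> {..n})" by auto
  then have "finite {(f ^^ j) s | s j. s \<in> S \<and> j \<le> n}" using finite_S by simp
  then show ?thesis unfolding finite_dim_def orbit_span_def by blast
qed

lemma orbit_span_mono: "m \<le> n \<Longrightarrow> orbit_span m \<subseteq> orbit_span n"
  unfolding orbit_span_def by (intro span_mono) (use order_trans in blast)

lemma image_orbit_span: "f ` orbit_span n \<subseteq> orbit_span (Suc n)"
proof -
  have "f ` {(f ^^ j) s | s j. s \<in> S \<and> j \<le> n} \<subseteq> {(f ^^ j) s | s j. s \<in> S \<and> j \<le> Suc n}"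
  proof
    fix y assume "y \<in> f ` {(f ^^ j) s | s j. s \<in> S \<and> j \<le> n}"
    then obtain s j where "s \<in> S" "j \<le> n" "y = (f ^^ Suc j) s" by auto
    then show "y \<in> {(f ^^ j) s | s j. s \<in> S \<and> j \<le> Suc n}"
      by (intro CollectI exI[of _ s] exI[of _ "Suc j"]) simp
  qed
  then show ?thesis unfolding orbit_span_def image_span by (rule span_mono)
qed

lemma funpow_in_orbit_span: "v \<in> orbit_span n \<Longrightarrow> (f ^^ k) v \<in> orbit_span (n + k)"
  by (induction k) (use image_orbit_span in auto)

lemma orbit_span_Suc: "orbit_span (Suc n) \<subseteq> span (orbit_span n \<union> f ` orbit_span n)"
proof -
  have "{(f ^^ j) s | s j. s \<in> S \<and> j \<le> Suc n} \<subseteq> orbit_span n \<union> f ` orbit_span n"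
  proof
    fix y assume "y \<in> {(f ^^ j) s | s j. s \<in> S \<and> j \<le> Suc n}"
    then obtain s j where sj: "s \<in> S" "j \<le> Suc n" "y = (f ^^ j) s" by blast
    have gen: "(f ^^ i) s \<in> orbit_span n" if "i \<le> n" for i
      unfolding orbit_span_def using sj(1) that by (intro span_base) blast
    show "y \<in> orbit_span n \<union> f ` orbit_span n"
    proof (cases "j \<le> n")
      case True
      then show ?thesis using gen sj(3) by simp
    next
      case False
      then have "y = f ((f ^^ n) s)" using sj(2,3) by (simp add: le_Suc_eq)
      then show ?thesis using gen[of n] by simp
    qed
  qed
  then show ?thesis unfolding orbit_span_def[of "Suc n"] by (rule span_mono)
qed

lemma orbit_span_exhaustive: "\<exists>n. v \<in> orbit_span n"
proof -
  have "subspace (\<Union>n. orbit_span n)"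
    using subspace_UN_chain[OF subspace_orbit_span orbit_span_mono] by simp
  moreover have "{(f ^^ n) s | s n. s \<in> S} \<subseteq> (\<Union>n. orbit_span n)"
  proof
    fix y assume "y \<in> {(f ^^ n) s | s n. s \<in> S}"
    then obtain s n where "s \<in> S" "y = (f ^^ n) s" by blast
    then have "y \<in> orbit_span n" unfolding orbit_span_def by (intro span_base) auto
    then show "y \<in> (\<Union>n. orbit_span n)" by blast
  qed
  ultimately have "span {(f ^^ n) s | s n. s \<in> S} \<subseteq> (\<Union>n. orbit_span n)"
    by (intro span_minimal)
  then have "UNIV \<subseteq> (\<Union>n. orbit_span n)" unfolding span_orbits_S .
  then show ?thesis by blast
qed

lemma finite_dim_le_orbit_span:
  assumes "finite_dim scale N"
  obtains n where "N \<subseteq> orbit_span n"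
proof -
  obtain B where B: "finite B" "N \<subseteq> span B" using assms unfolding finite_dim_def by blast
  obtain deg where deg: "\<And>v. v \<in> orbit_span (deg v)" using orbit_span_exhaustive by metis
  define n where "n = Max (insert 0 (deg ` B))"
  have "B \<subseteq> orbit_span n"
  proof
    fix v assume "v \<in> B"
    then have "deg v \<le> n" using B(1) unfolding n_def by (intro Max_ge) simp_all
    then show "v \<in> orbit_span n" using deg orbit_span_mono by blast
  qed
  then have "span B \<subseteq> orbit_span n" using subspace_orbit_span by (rule span_minimal)
  with B(2) that show thesis by blast
qed

definition growth :: "nat \<Rightarrow> nat" where
  "growth n = dim (orbit_span (Suc n)) - dim (orbit_span n)"

lemma dim_orbit_span_Suc: "dim (orbit_span n) \<le> dim (orbit_span (Suc n))"
proof -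
  have "orbit_span n \<subseteq> orbit_span (Suc n)" by (rule orbit_span_mono) simp
  then have "orbit_span n \<subseteq> span (orbit_span (Suc n))" using span_superset by blast
  then show ?thesis by (rule dim_le_finite_dim[OF _ finite_dim_orbit_span])
qed

lemma growth_Suc_le: "growth (Suc n) \<le> growth n"
proof -
  have "dim (orbit_span (Suc (Suc n))) + dim (orbit_span n) \<le>
      dim (orbit_span (Suc n)) + dim (orbit_span (Suc n))"
    by (rule dim_image_extension_le[OF orbit_span_mono finite_dim_orbit_span image_orbit_span
          finite_dim_orbit_span orbit_span_Suc]) simp
  then show ?thesis using dim_orbit_span_Suc[of n] dim_orbit_span_Suc[of "Suc n"]
    unfolding growth_def by linarith
qed

lemma growth_Suc_less:
  assumes "v \<in> orbit_span (Suc n)" "v \<notin> orbit_span n" "f v \<in> orbit_span (Suc n)"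
  shows "growth (Suc n) < growth n"
proof -
  let ?A = "span (insert v (orbit_span n))"
  have "orbit_span n \<subseteq> orbit_span (Suc n)" by (rule orbit_span_mono) simp
  then have A: "?A \<subseteq> orbit_span (Suc n)"
    using assms(1) subspace_orbit_span by (intro span_minimal) auto
  have "f ` ?A = span (insert (f v) (f ` orbit_span n))" by (simp add: image_span)
  also have "\<dots> \<subseteq> orbit_span (Suc n)"
    using assms(3) image_orbit_span subspace_orbit_span by (intro span_minimal) auto
  finally have "dim (orbit_span (Suc (Suc n))) + dim ?A \<le>
      dim (orbit_span (Suc n)) + dim (orbit_span (Suc n))"
    by (rule dim_image_extension_le[OF A finite_dim_orbit_span _ finite_dim_orbit_span orbit_span_Suc])
  moreover have "v \<notin> span (orbit_span n)" using assms(2) by (simp add: orbit_span_def span_span)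
  then have "dim ?A = Suc (dim (orbit_span n))"
    unfolding dim_span by (rule dim_insert_finite_dim[OF _ finite_dim_orbit_span])
  ultimately show ?thesis using dim_orbit_span_Suc[of "Suc n"]
    unfolding growth_def by linarith
qed

lemma growth_eventually_constant: "\<exists>N. \<forall>n\<ge>N. growth n = growth N"
proof -
  obtain N where N: "\<And>n. growth N \<le> growth n"
    using ex_has_least_nat[of "\<lambda>_. True" 0 growth] by auto
  have "growth n \<le> growth N" if "N \<le> n" for n
    using that
  proof (induction rule: dec_induct)
    case (step m)
    then show ?case using growth_Suc_le[of m] by linarith
  qed simp
  then show ?thesis using N by (intro exI[of _ N]) (auto intro: antisym)
qed

lemma eventually_vimage_orbit_span:
  "\<exists>N. \<forall>n\<ge>N. \<forall>v. f v \<in> orbit_span (Suc n) \<longrightarrow> v \<in> orbit_span n"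
proof -
  obtain N where N: "\<And>n. N \<le> n \<Longrightarrow> growth n = growth N" using growth_eventually_constant by blast
  have "v \<in> orbit_span n" if "N \<le> n" "f v \<in> orbit_span (Suc n)" for n v
  proof (rule ccontr)
    assume v: "v \<notin> orbit_span n"
    define m where "m = (LEAST m. v \<in> orbit_span m)"
    have vm: "v \<in> orbit_span m" unfolding m_def by (rule LeastI_ex[OF orbit_span_exhaustive])
    have "n < m" using v vm orbit_span_mono[of m n] by (cases "m \<le> n") auto
    then obtain m' where m': "m = Suc m'" "n \<le> m'" by (cases m) auto
    have "v \<notin> orbit_span m'" using not_less_Least[of m' "\<lambda>m. v \<in> orbit_span m"] m' by (simp add: m_def)
    moreover have "f v \<in> orbit_span (Suc m')" using that(2) orbit_span_mono[of "Suc n" "Suc m'"] m' by auto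
    ultimately have "growth (Suc m') < growth m'" using growth_Suc_less[of v m'] vm m'(1) by simp
    then show False using N[of m'] N[of "Suc m'"] m'(2) that(1) by simp
  qed
  then show ?thesis by blast
qed

definition stable_degree :: nat where
  "stable_degree = (LEAST N. \<forall>n\<ge>N. \<forall>v. f v \<in> orbit_span (Suc n) \<longrightarrow> v \<in> orbit_span n)"

lemma vimage_orbit_span:
  assumes "stable_degree \<le> n" "f v \<in> orbit_span (Suc n)"
  shows "v \<in> orbit_span n"
proof -
  have "\<forall>n\<ge>stable_degree. \<forall>v. f v \<in> orbit_span (Suc n) \<longrightarrow> v \<in> orbit_span n"
    unfolding stable_degree_def by (rule LeastI_ex[OF eventually_vimage_orbit_span])
  then show ?thesis using assms by blast
qed

lemma funpow_vimage_orbit_span: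
  "stable_degree \<le> n \<Longrightarrow> (f ^^ k) v \<in> orbit_span (n + k) \<Longrightarrow> v \<in> orbit_span n"
proof (induction k)
  case (Suc k)
  have "f ((f ^^ k) v) \<in> orbit_span (Suc (n + k))" using Suc.prems(2) by simp
  then have "(f ^^ k) v \<in> orbit_span (n + k)"
    using vimage_orbit_span[of "n + k" "(f ^^ k) v"] Suc.prems(1) by simp
  then show ?case using Suc.IH Suc.prems(1) by blast
qed simp

lemma fd_part_le_orbit_span: "fd_part scale f \<subseteq> orbit_span stable_degree"
proof (rule fd_part_least[OF subspace_orbit_span])
  fix N assume N: "subspace N" "f ` N \<subseteq> N" "finite_dim scale N"
  obtain m where m: "N \<subseteq> orbit_span m" using finite_dim_le_orbit_span[OF N(3)] .
  show "N \<subseteq> orbit_span stable_degree"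
  proof
    fix v assume "v \<in> N"
    then have "(f ^^ m) v \<in> orbit_span m" using funpow_in_invariant[OF N(2)] m by blast
    then have "(f ^^ m) v \<in> orbit_span (stable_degree + m)"
      using orbit_span_mono[of m "stable_degree + m"] by auto
    then show "v \<in> orbit_span stable_degree" by (rule funpow_vimage_orbit_span[OF order_refl])
  qed
qed

lemma fin_dim_sub_fd_part: "fin_dim_sub scale (fd_part scale f)"
proof -
  have "fd_part scale f \<subseteq> span (orbit_span stable_degree)"
    using fd_part_le_orbit_span span_superset by blast
  then have "finite_dim scale (fd_part scale f)" by (rule finite_dim_subset[OF _ finite_dim_orbit_span])
  then show ?thesis using subspace_fd_part by (simp add: fin_dim_sub_iff)
qed

text \<open>v \<in> lagged_span c n says that the asymptotic degree of v, i.e. the eventual value of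
  (degree of f^k v) - k, is at most n - c.\<close>
definition lagged_span :: "nat \<Rightarrow> nat \<Rightarrow> 'm set" where
  "lagged_span c n = {v. \<exists>k. (f ^^ (k + c)) v \<in> orbit_span (n + k)}"

lemma subspace_lagged_span: "subspace (lagged_span c n)"
proof -
  have eq: "lagged_span c n = (\<Union>k. (f ^^ (k + c)) -` orbit_span (n + k))"
    by (auto simp: lagged_span_def)
  have "(f ^^ (k + c)) -` orbit_span (n + k) \<subseteq> (f ^^ (Suc k + c)) -` orbit_span (n + Suc k)" for k
  proof
    fix v assume "v \<in> (f ^^ (k + c)) -` orbit_span (n + k)"
    then have "f ((f ^^ (k + c)) v) \<in> orbit_span (Suc (n + k))" using image_orbit_span by blast
    then show "v \<in> (f ^^ (Suc k + c)) -` orbit_span (n + Suc k)" by simp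
  qed
  then show ?thesis unfolding eq
    by (intro subspace_UN_chain subspace_vimage_funpow subspace_orbit_span)
qed

lemma lagged_span_mono:
  assumes "m \<le> n"
  shows "lagged_span c m \<subseteq> lagged_span c n"
proof
  fix v assume "v \<in> lagged_span c m"
  then obtain k where "(f ^^ (k + c)) v \<in> orbit_span (m + k)" by (auto simp: lagged_span_def)
  moreover have "orbit_span (m + k) \<subseteq> orbit_span (n + k)" using assms by (intro orbit_span_mono) simp
  ultimately show "v \<in> lagged_span c n" by (auto simp: lagged_span_def)
qed

lemma lagged_span_Suc_le: "lagged_span (Suc c) n \<subseteq> lagged_span c n"
proof
  fix v assume "v \<in> lagged_span (Suc c) n"
  then obtain k where "(f ^^ (k + Suc c)) v \<in> orbit_span (n + k)" by (auto simp: lagged_span_def)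
  moreover have "orbit_span (n + k) \<subseteq> orbit_span (n + Suc k)" by (intro orbit_span_mono) simp
  ultimately have "(f ^^ (Suc k + c)) v \<in> orbit_span (n + Suc k)" by auto
  then show "v \<in> lagged_span c n" unfolding lagged_span_def by blast
qed

lemma image_lagged_span_Suc: "f ` lagged_span (Suc c) n \<subseteq> lagged_span c n"
proof clarify
  fix v assume "v \<in> lagged_span (Suc c) n"
  then obtain k where "(f ^^ (k + Suc c)) v \<in> orbit_span (n + k)" by (auto simp: lagged_span_def)
  then have "(f ^^ (k + c)) (f v) \<in> orbit_span (n + k)" by (simp add: funpow_swap1)
  then show "f v \<in> lagged_span c n" unfolding lagged_span_def by blast
qed

lemma image_lagged_span: "f ` lagged_span c n \<subseteq> lagged_span c (Suc n)"
proof clarify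
  fix v assume "v \<in> lagged_span c n"
  then obtain k where "(f ^^ (k + c)) v \<in> orbit_span (n + k)" by (auto simp: lagged_span_def)
  then have "f ((f ^^ (k + c)) v) \<in> orbit_span (Suc n + k)" using image_orbit_span by auto
  then have "(f ^^ (k + c)) (f v) \<in> orbit_span (Suc n + k)" by (simp add: funpow_swap1)
  then show "f v \<in> lagged_span c (Suc n)" unfolding lagged_span_def by blast
qed

lemma vimage_lagged_span:
  assumes "f v \<in> lagged_span c (Suc n)"
  shows "v \<in> lagged_span c n"
proof -
  obtain k where "(f ^^ (k + c)) (f v) \<in> orbit_span (Suc n + k)"
    using assms by (auto simp: lagged_span_def)
  then have "(f ^^ (Suc k + c)) v \<in> orbit_span (n + Suc k)" by (simp add: funpow_swap1)
  then show ?thesis unfolding lagged_span_def by blast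
qed

lemma orbit_span_le_lagged_span: "orbit_span n \<subseteq> lagged_span c (n + c)"
proof
  fix v assume "v \<in> orbit_span n"
  then have "(f ^^ (0 + c)) v \<in> orbit_span (n + c + 0)" using funpow_in_orbit_span by simp
  then show "v \<in> lagged_span c (n + c)" unfolding lagged_span_def by blast
qed

lemma lagged_span_le_orbit_span:
  assumes "stable_degree \<le> n"
  shows "lagged_span c (n + c) \<subseteq> orbit_span n"
proof
  fix v assume "v \<in> lagged_span c (n + c)"
  then obtain k where "(f ^^ (k + c)) v \<in> orbit_span (n + (k + c))"
    by (auto simp: lagged_span_def ac_simps)
  then show "v \<in> orbit_span n" by (rule funpow_vimage_orbit_span[OF assms])
qed

lemma finite_dim_lagged_span: "finite_dim scale (lagged_span c n)"
proof -
  have "lagged_span c n \<subseteq> lagged_span c (n + stable_degree + c)" by (rule lagged_span_mono) simp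
  also have "\<dots> \<subseteq> orbit_span (n + stable_degree)" by (rule lagged_span_le_orbit_span) simp
  finally show ?thesis
    using finite_dim_subset[OF _ finite_dim_orbit_span] span_superset by blast
qed

lemma fd_part_le_lagged_span: "fd_part scale f \<subseteq> lagged_span c 0"
proof
  fix v assume "v \<in> fd_part scale f"
  then have "(f ^^ (stable_degree + c)) v \<in> orbit_span (0 + stable_degree)"
    using funpow_in_invariant[OF image_fd_part] fd_part_le_orbit_span by auto
  then show "v \<in> lagged_span c 0" unfolding lagged_span_def by blast
qed

definition lag :: nat where
  "lag = (SOME c. lagged_span (Suc c) 0 = lagged_span c 0)"

lemma lagged_span_Suc_lag: "lagged_span (Suc lag) 0 = lagged_span lag 0"
proof -
  have "\<exists>c. lagged_span (Suc c) 0 = lagged_span c 0"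
    by (rule decreasing_subspaces_stabilize[of "\<lambda>c. lagged_span c 0"])
      (simp_all add: subspace_lagged_span lagged_span_Suc_le finite_dim_lagged_span)
  then show ?thesis unfolding lag_def by (rule someI_ex)
qed

definition filtration :: "nat \<Rightarrow> 'm set" where
  "filtration n = lagged_span lag n"

lemma filtration_0: "filtration 0 = fd_part scale f"
proof
  show "fd_part scale f \<subseteq> filtration 0" unfolding filtration_def by (rule fd_part_le_lagged_span)
  have "f ` lagged_span lag 0 \<subseteq> lagged_span lag 0"
    using image_lagged_span_Suc[of lag 0] unfolding lagged_span_Suc_lag .
  then show "filtration 0 \<subseteq> fd_part scale f" unfolding filtration_def
    by (intro stable_subspace_le_fd_part subspace_lagged_span finite_dim_lagged_span)
qed

lemma filtration_generated:
  assumes "lag + stable_degree \<le> n"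
  shows "filtration (Suc n) \<subseteq> span (filtration n \<union> f ` filtration n)"
proof -
  obtain m where m: "n = m + lag" "stable_degree \<le> m"
    using assms by (intro that[of "n - lag"]) auto
  have "filtration (Suc n) \<subseteq> orbit_span (Suc m)"
    using lagged_span_le_orbit_span[of "Suc m" lag] m by (simp add: filtration_def)
  also have "\<dots> \<subseteq> span (orbit_span m \<union> f ` orbit_span m)" by (rule orbit_span_Suc)
  also have "\<dots> \<subseteq> span (filtration n \<union> f ` filtration n)"
    using orbit_span_le_lagged_span[of m lag] unfolding filtration_def m(1)
    by (intro span_mono) blast
  finally show ?thesis .
qed

lemma good_filtration: "good_filtration scale f filtration (lag + stable_degree)"
proof (rule good_filtration.intro[OF semilinear_endo], rule good_filtration_axioms.intro)
  show "subspace (filtration n)" for n unfolding filtration_def by (rule subspace_lagged_span)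
  show "filtration n \<subseteq> filtration (Suc n)" for n unfolding filtration_def by (rule lagged_span_mono) simp
  show "f ` filtration 0 \<subseteq> filtration 0" unfolding filtration_0 by (rule image_fd_part)
  show "f ` filtration n \<subseteq> filtration (Suc n)" for n unfolding filtration_def by (rule image_lagged_span)
  show "f v \<in> filtration (Suc n) \<Longrightarrow> v \<in> filtration n" for v n
    unfolding filtration_def by (rule vimage_lagged_span)
  show "\<exists>n. v \<in> filtration n" for v
    using orbit_span_exhaustive[of v] orbit_span_le_lagged_span unfolding filtration_def by blast
  show "finite_dim scale (filtration n)" for n unfolding filtration_def by (rule finite_dim_lagged_span)
  show "lag + stable_degree \<le> n \<Longrightarrow> filtration (Suc n) \<subseteq> span (filtration n \<union> f ` filtration n)"
    for n by (rule filtration_generated)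
qed

theorem free_fin_rank_mod_fd_part: "free_fin_rank_mod scale f (fd_part scale f)"
proof -
  interpret W: good_filtration scale f filtration "lag + stable_degree" by (rule good_filtration)
  show ?thesis using W.free_fin_rank_mod_W0 unfolding filtration_0 .
qed

end

lemma fd_part_fin_dim_and_free:
  assumes "semilinear_endo scale f" "fin_gen_over scale f"
  shows "fin_dim_sub scale (fd_part scale f) \<and> free_fin_rank_mod scale f (fd_part scale f)"
proof -
  obtain S where "finite S" "module.span scale {(f ^^ n) s | s n. s \<in> S} = UNIV"
    using assms(2) unfolding fin_gen_over_def by blast
  then interpret fin_gen_semilinear_endo scale f S
    by (intro fin_gen_semilinear_endo.intro assms(1) fin_gen_semilinear_endo_axioms.intro)
  show ?thesis using fin_dim_sub_fd_part free_fin_rank_mod_fd_part by blast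
qed

lemma alg_closed_field_nth_root:
  assumes "alg_closed_field TYPE('k::field)" "0 < n"
  shows "\<exists>x::'k. x ^ n = c"
proof -
  define P where "P = monom (1::'k) n + [:- c:]"
  have "degree P = n" unfolding P_def
    by (subst degree_add_eq_left) (use assms(2) in \<open>simp_all add: degree_monom_eq\<close>)
  then obtain x where "poly P x = 0" using assms unfolding alg_closed_field_def by blast
  then show ?thesis unfolding P_def by (auto simp: poly_monom)
qed

lemma semilinear_endo_sigma:
  fixes scale :: "'k::field \<Rightarrow> 'm::ab_group_add \<Rightarrow> 'm"
  assumes "kt_sigma_module q scale sig t" "0 < q" "\<And>c::'k. \<exists>x. x ^ q = c"
  shows "semilinear_endo scale sig"
proof -
  have vs: "vector_space scale" and add: "\<And>u v. sig (u + v) = sig u + sig v"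
    and frob: "\<And>x v. sig (scale (x ^ q) v) = scale x (sig v)"
    using assms(1) unfolding kt_sigma_module_def by blast+
  show ?thesis
  proof (rule semilinear_endo.intro[OF vs], rule semilinear_endo_axioms.intro)
    show "sig (u + v) = sig u + sig v" for u v by (rule add)
    show "\<exists>c'. \<forall>v. sig (scale c v) = scale c' (sig v)" for c
      using assms(3)[of c] frob by metis
    show "\<exists>c'. (c' = 0 \<longrightarrow> c = 0) \<and> (\<forall>v. sig (scale c' v) = scale c (sig v))" for c
      using frob[of c] assms(2) by (intro exI[of _ "c ^ q"]) simp
  qed
qed

lemma semilinear_endo_t:
  assumes "kt_sigma_module q scale sig t"
  shows "semilinear_endo scale t"
proof -
  have vs: "vector_space scale" and add: "\<And>u v. t (u + v) = t u + t v"
    and lin: "\<And>x v. t (scale x v) = scale x (t v)"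
    using assms unfolding kt_sigma_module_def by blast+
  show ?thesis
    by (rule semilinear_endo.intro[OF vs], rule semilinear_endo_axioms.intro)
      (use add lin in auto)
qed

theorem proposition4:
  fixes q :: nat
    and scale :: "'k::field \<Rightarrow> 'm::ab_group_add \<Rightarrow> 'm"
    and sig :: "'m \<Rightarrow> 'm"
    and t :: "'m \<Rightarrow> 'm"
  assumes "is_alg_closure_FqT q TYPE('k)"
    and "kt_sigma_module q scale sig t"
    and "fin_gen_over scale sig"
    and "fin_gen_over scale t"
  shows "fd_part scale sig = fd_part scale t
    \<and> fin_dim_sub scale (fd_part scale sig)
    \<and> free_fin_rank_mod scale sig (fd_part scale sig)
    \<and> free_fin_rank_mod scale t (fd_part scale sig)"
proof -
  obtain p e where "prime p" "q = p ^ e"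
    using assms(1) unfolding is_alg_closure_FqT_def by blast
  then have "0 < q" by (simp add: prime_gt_0_nat)
  moreover have "alg_closed_field TYPE('k)"
    using assms(1) unfolding is_alg_closure_FqT_def by blast
  ultimately have sig: "semilinear_endo scale sig"
    using semilinear_endo_sigma[OF assms(2)] alg_closed_field_nth_root by blast
  have t: "semilinear_endo scale t" using semilinear_endo_t[OF assms(2)] .
  have comm: "sig (t v) = t (sig v)" for v using assms(2) unfolding kt_sigma_module_def by blast
  have fd_sig: "fin_dim_sub scale (fd_part scale sig)" "free_fin_rank_mod scale sig (fd_part scale sig)"
    using fd_part_fin_dim_and_free[OF sig assms(3)] by blast+
  have fd_t: "fin_dim_sub scale (fd_part scale t)" "free_fin_rank_mod scale t (fd_part scale t)"
    using fd_part_fin_dim_and_free[OF t assms(4)] by blast+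
  interpret sig: semilinear_endo scale sig by (rule sig)
  interpret t: semilinear_endo scale t by (rule t)
  have "fd_part scale sig = fd_part scale t"
    using sig.fd_part_le_fd_part_commuting[OF fd_sig(1) t comm]
      t.fd_part_le_fd_part_commuting[OF fd_t(1) sig comm[symmetric]] by (rule antisym)
  then show ?thesis using fd_sig fd_t(2) by simp
qed

end
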